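(* Let $p\neq 2$ be a prime and $G=Z_{p^{\lambda_1}}\times\cdots\times Z_{p^{\lambda_n}}$ with $0<\lambda_1<\cdots<\lambda_n$. The poset $J(G)$ is self-dual; an order-reversing involution of $J(G)$ is given by $J(i,j)\mapsto J(i,\lambda_i-j+1)$.
   Context: Tuples are ordered componentwise; for $\mathbf 0\le\mathbf a\le(\lambda_1,\dots,\lambda_n)$, $T(\mathbf a)$ is the set of $(g_1,\dots,g_n)\in G$ with $|g_i|=p^{a_i}$, and $R(\mathbf a)=\bigcup_{\mathbf b\le\mathbf a}T(\mathbf b)$. For $i\in\{1,\dots,n\}$ and $j\in\{1,\dots,\lambda_i\}$, $J(i,j)=R(\mathbf a)$ where $a_k=j$ for $k\ge i$ and $a_k=\max\{0,\,j-(\lambda_i-\lambda_k)\}$ for $k<i$. $J(G)$ is the set of all $J(i,j)$ (these are exactly the join-irreducible elements of the lattice of characteristic subgroups of $G$), partially ordered by inclusion. *)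

theory Defs
  imports "HOL-Computational_Algebra.Primes" "HOL-Algebra.Elementary_Groups" "HOL-Algebra.Multiplicative_Group"
begin

definition Zfac :: "nat \<Rightarrow> (nat \<Rightarrow> nat) \<Rightarrow> nat \<Rightarrow> int monoid" where
  "Zfac p lam i = integer_mod_group (p ^ lam i)"

definition Gcar :: "nat \<Rightarrow> (nat \<Rightarrow> nat) \<Rightarrow> nat \<Rightarrow> (nat \<Rightarrow> int) set" where
  "Gcar p lam n = (\<Pi>\<^sub>E i\<in>{1..n}. carrier (Zfac p lam i))"

definition Tset :: "nat \<Rightarrow> (nat \<Rightarrow> nat) \<Rightarrow> nat \<Rightarrow> (nat \<Rightarrow> nat) \<Rightarrow> (nat \<Rightarrow> int) set" where
  "Tset p lam n a = {g \<in> Gcar p lam n. \<forall>i\<in>{1..n}. group.ord (Zfac p lam i) (g i) = p ^ a i}"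

definition Rset :: "nat \<Rightarrow> (nat \<Rightarrow> nat) \<Rightarrow> nat \<Rightarrow> (nat \<Rightarrow> nat) \<Rightarrow> (nat \<Rightarrow> int) set" where
  "Rset p lam n a = (\<Union>b \<in> {b. \<forall>i\<in>{1..n}. b i \<le> a i}. Tset p lam n b)"

text \<open>J(i,j) = R(a) with a_k = j for k >= i and a_k = max 0 (j - (lam i - lam k)) for k < i
  (natural-number subtraction truncates at 0, which realises the max).\<close>
definition Jset :: "nat \<Rightarrow> (nat \<Rightarrow> nat) \<Rightarrow> nat \<Rightarrow> nat \<Rightarrow> nat \<Rightarrow> (nat \<Rightarrow> int) set" where
  "Jset p lam n i j = Rset p lam n (\<lambda>k. if i \<le> k then j else j - (lam i - lam k))"

definition JG :: "nat \<Rightarrow> (nat \<Rightarrow> nat) \<Rightarrow> nat \<Rightarrow> (nat \<Rightarrow> int) set set" where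
  "JG p lam n = {Jset p lam n i j | i j. 1 \<le> i \<and> i \<le> n \<and> 1 \<le> j \<and> j \<le> lam i}"

end

theory Submission
  imports Defs
begin

text \<open>Since \<open>\<lambda>\<close> is monotone, \<open>J(i,j)\<close> is \<open>R(a)\<close> for the exponent tuple
  \<open>a\<^sub>k = j - (\<lambda>\<^sub>i - \<lambda>\<^sub>k)\<close> (truncated), uniformly in \<open>k\<close>. For exponents bounded by \<open>\<lambda>\<close> the map
  \<open>a \<mapsto> R(a)\<close> is an order embedding, since every \<open>T(a)\<close> is nonempty. Hence \<open>J(i,j) \<subseteq> J(i',j')\<close>
  holds iff \<open>j \<le> j' - (\<lambda>\<^sub>i\<^sub>' - \<lambda>\<^sub>i)\<close>, the comparison at the single coordinate \<open>i\<close>, and a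
  short computation in truncated arithmetic shows that \<open>j \<mapsto> \<lambda>\<^sub>i - j + 1\<close> reverses this
  relation.\<close>

lemma mono_on_atLeastAtMost_Suc:
  fixes f :: "nat \<Rightarrow> 'a :: order"
  assumes "\<And>i. 1 \<le> i \<Longrightarrow> i < n \<Longrightarrow> f i \<le> f (i + 1)"
  shows "mono_on {1..n} f"
proof (rule mono_onI)
  fix i k assume "i \<in> {1..n}" "k \<in> {1..n}" "i \<le> k"
  then have "i \<le> k" "1 \<le> i" "k \<le> n" by auto
  then show "f i \<le> f k"
  proof (induction k rule: dec_induct)
    case (step m)
    then show ?case using assms[of m] by (auto intro: order_trans)
  qed simp
qed

lemma Rset_mono:
  assumes "\<forall>k\<in>{1..n}. a k \<le> b k"
  shows "Rset p lam n a \<subseteq> Rset p lam n b"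
  using assms unfolding Rset_def by (auto intro: order_trans)

lemma ord_integer_mod_group_prime_power:
  assumes "0 < p" and "a \<le> L"
  defines "x \<equiv> int (p ^ (L - a)) mod int (p ^ L)"
  shows "x \<in> carrier (integer_mod_group (p ^ L))"
    and "group.ord (integer_mod_group (p ^ L)) x = p ^ a"
proof -
  let ?Z = "integer_mod_group (p ^ L)"
  show x: "x \<in> carrier ?Z"
    using assms(1) by (simp add: carrier_integer_mod_group x_def)
  have pL: "p ^ L = p ^ a * p ^ (L - a)"
    using assms(2) by (simp flip: power_add)
  have "pow ?Z x m = \<one>\<^bsub>?Z\<^esub> \<longleftrightarrow> p ^ a dvd m" for m :: nat
  proof -
    have "pow ?Z x m = int (m * p ^ (L - a)) mod int (p ^ L)"
      by (simp add: x_def mod_mult_right_eq)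
    then have "pow ?Z x m = 0 \<longleftrightarrow> p ^ L dvd m * p ^ (L - a)"
      by (metis of_nat_mod of_nat_eq_0_iff dvd_eq_mod_eq_0)
    also have "\<dots> \<longleftrightarrow> p ^ a dvd m"
      using assms(1) by (simp add: pL)
    finally show ?thesis by simp
  qed
  then show "group.ord ?Z x = p ^ a"
    using group.ord_unique[OF group_integer_mod_group x] by blast
qed

lemma Tset_witness:
  assumes "0 < p" and "\<forall>k\<in>{1..n}. a k \<le> lam k"
  shows "restrict (\<lambda>k. int (p ^ (lam k - a k)) mod int (p ^ lam k)) {1..n} \<in> Tset p lam n a"
  using ord_integer_mod_group_prime_power[OF assms(1)] assms(2)
  unfolding Tset_def Gcar_def Zfac_def by auto

lemma Rset_subset_iff:
  assumes "prime p" and "\<forall>k\<in>{1..n}. a k \<le> lam k"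
  shows "Rset p lam n a \<subseteq> Rset p lam n b \<longleftrightarrow> (\<forall>k\<in>{1..n}. a k \<le> b k)"
proof
  assume sub: "Rset p lam n a \<subseteq> Rset p lam n b"
  obtain g where "g \<in> Tset p lam n a"
    using Tset_witness[OF prime_gt_0_nat[OF assms(1)] assms(2)] by blast
  moreover from this have "g \<in> Rset p lam n b"
    using sub unfolding Rset_def by auto
  then obtain c where c: "\<forall>k\<in>{1..n}. c k \<le> b k" "g \<in> Tset p lam n c"
    unfolding Rset_def by auto
  ultimately have "\<forall>k\<in>{1..n}. p ^ a k = p ^ c k"
    unfolding Tset_def by auto
  then show "\<forall>k\<in>{1..n}. a k \<le> b k"
    using c(1) power_inject_exp[OF prime_gt_1_nat[OF assms(1)]] by auto
qed (rule Rset_mono)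

definition Jexp :: "(nat \<Rightarrow> nat) \<Rightarrow> nat \<Rightarrow> nat \<Rightarrow> nat \<Rightarrow> nat" where
  "Jexp lam i j = (\<lambda>k. j - (lam i - lam k))"

lemma Jset_eq_Rset_Jexp:
  assumes "mono_on {1..n} lam" and "i \<in> {1..n}"
  shows "Jset p lam n i j = Rset p lam n (Jexp lam i j)"
proof -
  have "\<forall>k\<in>{1..n}. (if i \<le> k then j else j - (lam i - lam k)) = Jexp lam i j k"
    using assms mono_onD[OF assms(1) assms(2)] by (auto simp: Jexp_def)
  then show ?thesis
    unfolding Jset_def by (intro subset_antisym Rset_mono) simp_all
qed

lemma Jexp_le_lam:
  "j \<le> lam i \<Longrightarrow> Jexp lam i j k \<le> lam k"
  by (simp add: Jexp_def)

lemma Jexp_le_Jexp_iff: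
  assumes "i \<in> {1..n}"
  shows "(\<forall>k\<in>{1..n}. Jexp lam i j k \<le> Jexp lam i' j' k) \<longleftrightarrow> j \<le> Jexp lam i' j' i"
proof
  assume "j \<le> Jexp lam i' j' i"
  then show "\<forall>k\<in>{1..n}. Jexp lam i j k \<le> Jexp lam i' j' k"
    by (auto simp: Jexp_def)
next
  assume "\<forall>k\<in>{1..n}. Jexp lam i j k \<le> Jexp lam i' j' k"
  from bspec[OF this assms] show "j \<le> Jexp lam i' j' i"
    by (simp add: Jexp_def)
qed

lemma Jexp_dual:
  assumes "1 \<le> j" "j \<le> lam i" "j' \<le> lam i'" and "j \<le> Jexp lam i' j' i"
  shows "lam i' - j' + 1 \<le> Jexp lam i (lam i - j + 1) i'"
  using assms by (simp add: Jexp_def)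

lemma Jset_dual_antimono:
  assumes p: "prime p" and mono: "mono_on {1..n} lam"
    and i: "i \<in> {1..n}" "1 \<le> j" "j \<le> lam i"
    and i': "i' \<in> {1..n}" "1 \<le> j'" "j' \<le> lam i'"
    and sub: "Jset p lam n i j \<subseteq> Jset p lam n i' j'"
  shows "Jset p lam n i' (lam i' - j' + 1) \<subseteq> Jset p lam n i (lam i - j + 1)"
proof -
  have "Rset p lam n (Jexp lam i j) \<subseteq> Rset p lam n (Jexp lam i' j')"
    using sub by (simp add: Jset_eq_Rset_Jexp[OF mono i(1)] Jset_eq_Rset_Jexp[OF mono i'(1)])
  then have "\<forall>k\<in>{1..n}. Jexp lam i j k \<le> Jexp lam i' j' k"
    using Rset_subset_iff[OF p] Jexp_le_lam[of j lam i] i(3) by blast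
  then have "j \<le> Jexp lam i' j' i"
    using Jexp_le_Jexp_iff[OF i(1)] by blast
  then have "lam i' - j' + 1 \<le> Jexp lam i (lam i - j + 1) i'"
    using Jexp_dual i i' by blast
  then have "\<forall>k\<in>{1..n}. Jexp lam i' (lam i' - j' + 1) k \<le> Jexp lam i (lam i - j + 1) k"
    using Jexp_le_Jexp_iff[OF i'(1)] by blast
  then have "Rset p lam n (Jexp lam i' (lam i' - j' + 1)) \<subseteq> Rset p lam n (Jexp lam i (lam i - j + 1))"
    by (rule Rset_mono)
  then show ?thesis
    by (simp add: Jset_eq_Rset_Jexp[OF mono i(1)] Jset_eq_Rset_Jexp[OF mono i'(1)])
qed

lemma antitone_involution_of_image:
  fixes F :: "'a \<Rightarrow> 'b :: order"
  assumes "\<forall>a\<in>P. d a \<in> P" and "\<forall>a\<in>P. d (d a) = a"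
    and antimono: "\<forall>a\<in>P. \<forall>b\<in>P. F a \<le> F b \<longrightarrow> F (d b) \<le> F (d a)"
  shows "\<exists>\<phi>. (\<forall>X\<in>F ` P. \<phi> X \<in> F ` P) \<and> (\<forall>X\<in>F ` P. \<phi> (\<phi> X) = X)
           \<and> (\<forall>X\<in>F ` P. \<forall>Y\<in>F ` P. X \<le> Y \<longrightarrow> \<phi> Y \<le> \<phi> X)
           \<and> (\<forall>a\<in>P. \<phi> (F a) = F (d a))"
proof -
  define \<phi> where "\<phi> X = F (d (inv_into P F X))" for X
  have \<phi>: "\<phi> (F a) = F (d a)" if "a \<in> P" for a
  proof -
    have "inv_into P F (F a) \<in> P" "F (inv_into P F (F a)) = F a"
      using that by (auto intro: inv_into_into f_inv_into_f)
    then show ?thesis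
      unfolding \<phi>_def using antimono that by (metis order_antisym order_refl)
  qed
  show ?thesis
    by (rule exI[of _ \<phi>]) (use assms \<phi> in auto)
qed

theorem mainTheorem17:
  fixes p n :: nat and lam :: "nat \<Rightarrow> nat"
  assumes "prime p" and "p \<noteq> 2"
    and "0 < lam 1"
    and "\<forall>i. 1 \<le> i \<and> i < n \<longrightarrow> lam i < lam (i + 1)"
  shows "\<exists>\<phi>. (\<forall>X\<in>JG p lam n. \<phi> X \<in> JG p lam n)
          \<and> (\<forall>X\<in>JG p lam n. \<phi> (\<phi> X) = X)
          \<and> (\<forall>X\<in>JG p lam n. \<forall>Y\<in>JG p lam n. X \<subseteq> Y \<longrightarrow> \<phi> Y \<subseteq> \<phi> X)
          \<and> (\<forall>i j. 1 \<le> i \<and> i \<le> n \<and> 1 \<le> j \<and> j \<le> lam i \<longrightarrow>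
                 \<phi> (Jset p lam n i j) = Jset p lam n i (lam i - j + 1))"
proof -
  define P where "P = {(i, j). 1 \<le> i \<and> i \<le> n \<and> 1 \<le> j \<and> j \<le> lam i}"
  define d where "d = (\<lambda>(i, j). (i, lam i - j + 1))"
  have "mono_on {1..n} lam"
    using assms(4) by (intro mono_on_atLeastAtMost_Suc) (simp add: less_imp_le)
  then have "\<forall>a\<in>P. \<forall>b\<in>P. case_prod (Jset p lam n) a \<subseteq> case_prod (Jset p lam n) b \<longrightarrow>
      case_prod (Jset p lam n) (d b) \<subseteq> case_prod (Jset p lam n) (d a)"
    using Jset_dual_antimono[OF assms(1)] by (auto simp: P_def d_def)
  moreover have "\<forall>a\<in>P. d a \<in> P" "\<forall>a\<in>P. d (d a) = a"
    by (auto simp: P_def d_def)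
  moreover have "JG p lam n = case_prod (Jset p lam n) ` P"
    by (auto simp: JG_def P_def)
  ultimately show ?thesis
    using antitone_involution_of_image[of P d "case_prod (Jset p lam n)"]
    by (simp add: P_def d_def)
qed

end
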